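(* Let $k$ be a field of characteristic zero, let $n\ge 1$ and $R=k[x_1,\ldots,x_n]$. Let $\mathfrak{D}$ be a set of pairwise commuting $k$-derivations of $R$ such that $R$ is $\mathfrak{D}$-simple and $\partial_{x_1},\ldots,\partial_{x_{n-1}}\in\mathfrak{D}$, and assume the Jacobian Conjecture holds in $n$ variables over $k$. Then there exists $d\in\mathfrak{D}$ such that $\{\partial_{x_1},\ldots,\partial_{x_{n-1}},d\}$ is a locally nilpotent commutative basis of the $R$-module $\mathrm{Der}_k(R)$. In particular, $d$ is locally nilpotent.
   Context: $\mathrm{Der}_k(R)$ is the (free) $R$-module of all $k$-derivations of $R$ (i.e. $k$-linear maps satisfying the Leibniz rule). A commutative basis of $\mathrm{Der}_k(R)$ is an $R$-basis consisting of pairwise commuting derivations; it is locally nilpotent if each of its elements $d$ is locally nilpotent, i.e. for every $f\in R$ there is $m\ge 1$ with $d^m(f)=0$. $R$ is $\mathfrak{D}$-simple if its only ideals $I$ with $d(I)\subseteq I$ for all $d\in\mathfrak{D}$ are $0$ and $R$. The Jacobian Conjecture in $n$ variables over $k$ asserts: if $F=(F_1,\ldots,F_n)\in k[x_1,\ldots,x_n]^n$ has Jacobian matrix $(\partial F_i/\partial x_j)$ invertible over $k[x_1,\ldots,x_n]$, then $F$ has a polynomial inverse. *)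

theory Defs
  imports "HOL-Library.Poly_Mapping"
begin

text \<open>The polynomial ring k[x_v | v :: 'v] over a field k, with the (finitely many)
  variables indexed by a finite type 'v (so n = CARD('v) \<ge> 1).\<close>

type_synonym ('v, 'k) mpoly = "('v \<Rightarrow>\<^sub>0 nat) \<Rightarrow>\<^sub>0 'k"

definition const_poly :: "'k::comm_ring_1 \<Rightarrow> ('v, 'k) mpoly" where
  "const_poly c = Poly_Mapping.single 0 c"

definition var_poly :: "'v \<Rightarrow> ('v, 'k::comm_ring_1) mpoly" where
  "var_poly v = Poly_Mapping.single (Poly_Mapping.single v 1) 1"

definition pderiv_var :: "'v \<Rightarrow> ('v, 'k::comm_ring_1) mpoly \<Rightarrow> ('v, 'k) mpoly" where
  "pderiv_var v p = Abs_poly_mapping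
     (\<lambda>m :: 'v \<Rightarrow>\<^sub>0 nat. of_nat (Poly_Mapping.lookup m v + 1) * Poly_Mapping.lookup p (m + Poly_Mapping.single v 1))"

definition is_derivation :: "(('v, 'k::comm_ring_1) mpoly \<Rightarrow> ('v, 'k) mpoly) \<Rightarrow> bool" where
  "is_derivation d \<longleftrightarrow>
     (\<forall>p q. d (p + q) = d p + d q) \<and>
     (\<forall>c p. d (const_poly c * p) = const_poly c * d p) \<and>
     (\<forall>p q. d (p * q) = p * d q + q * d p)"

definition locally_nilpotent :: "('a::zero \<Rightarrow> 'a) \<Rightarrow> bool" where
  "locally_nilpotent d \<longleftrightarrow> (\<forall>f. \<exists>m\<ge>1. (d ^^ m) f = 0)"

definition is_ideal :: "'a::comm_ring_1 set \<Rightarrow> bool" where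
  "is_ideal I \<longleftrightarrow> 0 \<in> I \<and> (\<forall>a\<in>I. \<forall>b\<in>I. a + b \<in> I) \<and> (\<forall>r. \<forall>a\<in>I. r * a \<in> I)"

definition D_simple :: "('a::comm_ring_1 \<Rightarrow> 'a) set \<Rightarrow> bool" where
  "D_simple D \<longleftrightarrow>
     (\<forall>I. is_ideal I \<and> (\<forall>d\<in>D. d ` I \<subseteq> I) \<longrightarrow> I = {0} \<or> I = UNIV)"

definition is_Der_basis ::
    "('v::finite \<Rightarrow> (('v, 'k::comm_ring_1) mpoly \<Rightarrow> ('v, 'k) mpoly)) \<Rightarrow> bool" where
  "is_Der_basis B \<longleftrightarrow>
     (\<forall>v. is_derivation (B v)) \<and>
     (\<forall>E. is_derivation E \<longrightarrow>
        (\<exists>!f :: 'v \<Rightarrow> ('v, 'k) mpoly. E = (\<lambda>p. \<Sum>v\<in>UNIV. f v * B v p)))"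

definition locally_nilpotent_commutative_basis ::
    "('v::finite \<Rightarrow> (('v, 'k::comm_ring_1) mpoly \<Rightarrow> ('v, 'k) mpoly)) \<Rightarrow> bool" where
  "locally_nilpotent_commutative_basis B \<longleftrightarrow>
     is_Der_basis B \<and> (\<forall>u w. B u \<circ> B w = B w \<circ> B u) \<and> (\<forall>v. locally_nilpotent (B v))"

definition peval :: "('v \<Rightarrow> ('w, 'k::comm_ring_1) mpoly) \<Rightarrow> ('v, 'k) mpoly \<Rightarrow> ('w, 'k) mpoly" where
  "peval G p = (\<Sum>m\<in>Poly_Mapping.keys p. const_poly (Poly_Mapping.lookup p m) * (\<Prod>v\<in>Poly_Mapping.keys m. G v ^ Poly_Mapping.lookup m v))"

definition jacobian :: "('v \<Rightarrow> ('v, 'k::comm_ring_1) mpoly) \<Rightarrow> 'v \<Rightarrow> 'v \<Rightarrow> ('v, 'k) mpoly" where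
  "jacobian F i j = pderiv_var j (F i)"

definition invertible_matrix :: "('v::finite \<Rightarrow> 'v \<Rightarrow> 'a::comm_ring_1) \<Rightarrow> bool" where
  "invertible_matrix A \<longleftrightarrow> (\<exists>B. (\<forall>i j. (\<Sum>l\<in>UNIV. A i l * B l j) = (if i = j then 1 else 0)) \<and>
                                 (\<forall>i j. (\<Sum>l\<in>UNIV. B i l * A l j) = (if i = j then 1 else 0)))"

definition jacobian_conjecture :: "'v::finite itself \<Rightarrow> 'k::field itself \<Rightarrow> bool" where
  "jacobian_conjecture _ _ \<longleftrightarrow>
     (\<forall>F :: 'v \<Rightarrow> ('v, 'k) mpoly. invertible_matrix (jacobian F) \<longrightarrow>
        (\<exists>G :: 'v \<Rightarrow> ('v, 'k) mpoly.
           (\<forall>v. peval F (G v) = var_poly v) \<and> (\<forall>v. peval G (F v) = var_poly v)))"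

end

theory Submission
  imports Defs
begin

text \<open>Since every d \<in> D commutes with \<partial>_w for w \<noteq> n, the polynomials d(x_v) lie in k[x_n].
  For d, e \<in> D the chain rule then gives e(d x_n) = d(e x_n) = d(x_n) \<cdot> \<partial>_n(e x_n), so the
  principal ideal generated by d(x_n) is D-stable. By D-simplicity a nonzero d(x_n) is a unit,
  and a unit lying in k[x_n] is a nonzero constant c; if d(x_n) = 0 for all d \<in> D, the ideal
  (x_n) itself would be D-stable, which is impossible. With d(x_n) = c the matrix of
  (\<partial>_1, ..., \<partial>_{n-1}, d) on the variables is triangular with unit diagonal, hence a basis
  of Der_k(R), and d is locally nilpotent since it maps k[x_n] nilpotently into itself and all
  d(x_v) into k[x_n].\<close>

lemma sum_single_lookup:
  fixes p :: "'a \<Rightarrow>\<^sub>0 'b::comm_monoid_add"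
  shows "(\<Sum>m\<in>Poly_Mapping.keys p. Poly_Mapping.single m (Poly_Mapping.lookup p m)) = p"
proof (rule poly_mapping_eqI)
  fix k
  show "Poly_Mapping.lookup (\<Sum>m\<in>Poly_Mapping.keys p. Poly_Mapping.single m (Poly_Mapping.lookup p m)) k
      = Poly_Mapping.lookup p k"
    by (cases "k \<in> Poly_Mapping.keys p") (auto simp: lookup_sum lookup_single when_def in_keys_iff)
qed

lemma poly_mapping_induct [case_names zero add single]:
  fixes p :: "'a \<Rightarrow>\<^sub>0 'b::comm_monoid_add"
  assumes "P 0" "\<And>p q. P p \<Longrightarrow> P q \<Longrightarrow> P (p + q)" "\<And>m c. P (Poly_Mapping.single m c)"
  shows "P p"
proof -
  have "P (\<Sum>m\<in>A. Poly_Mapping.single m (Poly_Mapping.lookup p m))" if "finite A" for A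
    using that by (induction A rule: finite_induct) (auto intro: assms)
  then show ?thesis
    using sum_single_lookup[of p] by (metis finite_keys)
qed

lemma lookup_single_mult:
  fixes q :: "'a::cancel_comm_monoid_add \<Rightarrow>\<^sub>0 'b::comm_semiring_1"
  shows "Poly_Mapping.lookup (Poly_Mapping.single m c * q) (m + y) = c * Poly_Mapping.lookup q y"
  by (simp add: lookup_mult lookup_single when_mult Sum_any_right_distrib[symmetric] mult_when)

lemma lookup_const_poly_mult:
  "Poly_Mapping.lookup (const_poly c * p) m = c * Poly_Mapping.lookup p m"
  using lookup_single_mult[of 0 c p m] by (simp add: const_poly_def)

lemma const_poly_mult: "const_poly a * const_poly b = const_poly (a * b)"
  by (simp add: const_poly_def mult_single)

lemma const_poly_1: "const_poly 1 = 1"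
  by (simp add: const_poly_def)

lemma const_poly_0: "const_poly 0 = 0"
  by (simp add: const_poly_def)

section \<open>Partial derivatives\<close>

lemma diff_single_add_single:
  fixes a :: "'v \<Rightarrow>\<^sub>0 nat"
  assumes "Poly_Mapping.lookup a v \<noteq> 0"
  shows "a - Poly_Mapping.single v 1 + Poly_Mapping.single v 1 = a"
  by (rule poly_mapping_eqI) (use assms in \<open>auto simp: lookup_add lookup_minus lookup_single when_def\<close>)

lemma add_diff_single_assoc:
  fixes a :: "'v \<Rightarrow>\<^sub>0 nat"
  assumes "Poly_Mapping.lookup b v \<noteq> 0"
  shows "a + b - Poly_Mapping.single v 1 = a + (b - Poly_Mapping.single v 1)"
  by (rule poly_mapping_eqI) (use assms in \<open>auto simp: lookup_add lookup_minus lookup_single when_def\<close>)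

lemma lookup_pderiv_var:
  "Poly_Mapping.lookup (pderiv_var v p) m =
     of_nat (Poly_Mapping.lookup m v + 1) * Poly_Mapping.lookup p (m + Poly_Mapping.single v 1)"
proof -
  let ?shift = "\<lambda>m. m + Poly_Mapping.single v 1"
  have "finite (?shift -` Poly_Mapping.keys p)"
    by (rule finite_vimageI) (auto simp: inj_def)
  then have "finite {m. of_nat (Poly_Mapping.lookup m v + 1) * Poly_Mapping.lookup p (?shift m) \<noteq> 0}"
    by (rule rev_finite_subset) (auto simp: in_keys_iff)
  then show ?thesis
    unfolding pderiv_var_def by simp
qed

lemma pderiv_var_add: "pderiv_var v (p + q) = pderiv_var v p + pderiv_var v q"
  by (rule poly_mapping_eqI) (simp add: lookup_pderiv_var lookup_add distrib_left)

lemma pderiv_var_0 [simp]: "pderiv_var v 0 = 0"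
  by (rule poly_mapping_eqI) (simp add: lookup_pderiv_var)

lemma pderiv_var_const_poly_mult: "pderiv_var v (const_poly c * p) = const_poly c * pderiv_var v p"
  by (rule poly_mapping_eqI) (simp add: lookup_pderiv_var lookup_const_poly_mult mult.left_commute)

lemma pderiv_var_single:
  "pderiv_var v (Poly_Mapping.single a c) =
     (if Poly_Mapping.lookup a v = 0 then 0
      else Poly_Mapping.single (a - Poly_Mapping.single v 1) (of_nat (Poly_Mapping.lookup a v) * c))"
proof (rule poly_mapping_eqI)
  fix m
  show "Poly_Mapping.lookup (pderiv_var v (Poly_Mapping.single a c)) m =
    Poly_Mapping.lookup (if Poly_Mapping.lookup a v = 0 then 0
      else Poly_Mapping.single (a - Poly_Mapping.single v 1) (of_nat (Poly_Mapping.lookup a v) * c)) m"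
  proof (cases "Poly_Mapping.lookup a v = 0")
    case True
    then have "a \<noteq> m + Poly_Mapping.single v 1"
      by (auto simp: lookup_add)
    with True show ?thesis
      by (simp add: lookup_pderiv_var lookup_single when_def)
  next
    case False
    have "a = m + Poly_Mapping.single v 1 \<longleftrightarrow> a - Poly_Mapping.single v 1 = m"
      using diff_single_add_single[OF False] by (metis add_diff_cancel_right')
    moreover have "a = m + Poly_Mapping.single v 1 \<Longrightarrow> Poly_Mapping.lookup m v + 1 = Poly_Mapping.lookup a v"
      by (simp add: lookup_add)
    ultimately show ?thesis
      using False by (auto simp: lookup_pderiv_var lookup_single when_def) (metis of_nat_Suc)
  qed
qed

lemma pderiv_var_var: "pderiv_var v (var_poly w) = (if v = w then 1 else 0)"
  by (auto simp: var_poly_def pderiv_var_single lookup_single)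

lemma pderiv_var_single_mult_single:
  fixes a b :: "'v \<Rightarrow>\<^sub>0 nat"
  shows "pderiv_var v (Poly_Mapping.single a c * Poly_Mapping.single b e) =
    Poly_Mapping.single a c * pderiv_var v (Poly_Mapping.single b e) +
    Poly_Mapping.single b e * pderiv_var v (Poly_Mapping.single a c)"
proof -
  have prod: "Poly_Mapping.single a c * Poly_Mapping.single b e = Poly_Mapping.single (a + b) (c * e)"
    by (simp add: mult_single)
  consider "Poly_Mapping.lookup a v = 0" "Poly_Mapping.lookup b v = 0"
    | "Poly_Mapping.lookup a v = 0" "Poly_Mapping.lookup b v \<noteq> 0"
    | "Poly_Mapping.lookup a v \<noteq> 0" "Poly_Mapping.lookup b v = 0"
    | "Poly_Mapping.lookup a v \<noteq> 0" "Poly_Mapping.lookup b v \<noteq> 0"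
    by blast
  then show ?thesis
  proof cases
    case 1
    then show ?thesis
      unfolding prod by (simp add: pderiv_var_single lookup_add)
  next
    case 2
    then have "a + b - Poly_Mapping.single v 1 = a + (b - Poly_Mapping.single v 1)"
      by (intro add_diff_single_assoc)
    with 2 show ?thesis
      unfolding prod by (simp add: pderiv_var_single lookup_add mult_single mult_ac)
  next
    case 3
    then have "b + a - Poly_Mapping.single v 1 = b + (a - Poly_Mapping.single v 1)"
      by (intro add_diff_single_assoc)
    with 3 show ?thesis
      unfolding prod by (simp add: pderiv_var_single lookup_add mult_single add.commute[of a b] mult_ac)
  next
    case 4
    then have "a + b - Poly_Mapping.single v 1 = a + (b - Poly_Mapping.single v 1)"
      and "a + b - Poly_Mapping.single v 1 = b + (a - Poly_Mapping.single v 1)"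
      using add_diff_single_assoc[of b v a] add_diff_single_assoc[of a v b] by (simp_all add: add.commute)
    with 4 show ?thesis
      unfolding prod
      by (simp add: pderiv_var_single lookup_add mult_single algebra_simps flip: single_add)
  qed
qed

lemma pderiv_var_mult: "pderiv_var v (p * q) = p * pderiv_var v q + q * pderiv_var v p"
proof (induction p rule: poly_mapping_induct)
  case (add p1 p2)
  then show ?case
    by (simp add: distrib_right pderiv_var_add algebra_simps)
next
  case (single a c)
  show ?case
    by (induction q rule: poly_mapping_induct)
       (auto simp: pderiv_var_single_mult_single pderiv_var_add algebra_simps)
qed simp

lemma is_derivation_pderiv_var: "is_derivation (pderiv_var v)"
  unfolding is_derivation_def
  by (intro conjI allI pderiv_var_add pderiv_var_const_poly_mult pderiv_var_mult)

section \<open>Derivations are determined on the variables\<close>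

lemma derivation_add: "is_derivation d \<Longrightarrow> d (p + q) = d p + d q"
  unfolding is_derivation_def by blast

lemma derivation_mult: "is_derivation d \<Longrightarrow> d (p * q) = p * d q + q * d p"
  unfolding is_derivation_def by blast

lemma derivation_const_poly_mult: "is_derivation d \<Longrightarrow> d (const_poly c * p) = const_poly c * d p"
  unfolding is_derivation_def by blast

lemma derivation_0 [simp]: "is_derivation d \<Longrightarrow> d 0 = 0"
  using derivation_add[of d 0 0] by simp

lemma derivation_1 [simp]: "is_derivation d \<Longrightarrow> d 1 = 0"
  using derivation_mult[of d 1 1] by simp

lemma derivation_const_poly [simp]: "is_derivation d \<Longrightarrow> d (const_poly c) = 0"
  using derivation_const_poly_mult[of d c 1] by simp

lemma is_derivation_linear_combination:
  assumes "\<And>v. is_derivation (B v)"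
  shows "is_derivation (\<lambda>p. \<Sum>v\<in>UNIV. f v * B v p)"
  unfolding is_derivation_def
proof (intro conjI allI)
  fix p q
  show "(\<Sum>v\<in>UNIV. f v * B v (p + q)) = (\<Sum>v\<in>UNIV. f v * B v p) + (\<Sum>v\<in>UNIV. f v * B v q)"
    by (simp add: derivation_add[OF assms] distrib_left sum.distrib)
  show "(\<Sum>v\<in>UNIV. f v * B v (p * q)) = p * (\<Sum>v\<in>UNIV. f v * B v q) + q * (\<Sum>v\<in>UNIV. f v * B v p)"
    by (simp add: derivation_mult[OF assms] distrib_left sum.distrib sum_distrib_left mult_ac)
next
  fix c p
  show "(\<Sum>v\<in>UNIV. f v * B v (const_poly c * p)) = const_poly c * (\<Sum>v\<in>UNIV. f v * B v p)"
    by (simp only: derivation_const_poly_mult[OF assms] sum_distrib_left) (simp only: mult_ac)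
qed

definition mpoly_vars :: "('v, 'k::zero) mpoly \<Rightarrow> 'v set" where
  "mpoly_vars p = (\<Union>m\<in>Poly_Mapping.keys p. Poly_Mapping.keys m)"

lemma var_poly_power: "var_poly v ^ k = Poly_Mapping.single (Poly_Mapping.single v k) (1::'k::comm_ring_1)"
  by (induction k) (auto simp: var_poly_def mult_single simp flip: single_add)

lemma single_eq_const_poly_mult_prod_var_poly:
  "Poly_Mapping.single m (c::'k::comm_ring_1) =
     const_poly c * (\<Prod>v\<in>Poly_Mapping.keys m. var_poly v ^ Poly_Mapping.lookup m v)"
proof -
  have prod_single: "(\<Prod>v\<in>A. Poly_Mapping.single (g v) (1::'k)) = Poly_Mapping.single (\<Sum>v\<in>A. g v) 1"
    if "finite A" for A and g :: "'v \<Rightarrow> 'v \<Rightarrow>\<^sub>0 nat"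
    using that by (induction A rule: finite_induct) (auto simp: mult_single)
  have "(\<Prod>v\<in>Poly_Mapping.keys m. var_poly v ^ Poly_Mapping.lookup m v) = Poly_Mapping.single m (1::'k)"
    using prod_single[of "Poly_Mapping.keys m" "\<lambda>v. Poly_Mapping.single v (Poly_Mapping.lookup m v)"]
      sum_single_lookup[of m]
    by (simp add: var_poly_power)
  then show ?thesis
    by (simp add: const_poly_def mult_single)
qed

lemma mpoly_vars_induct [consumes 1, case_names const var add mult]:
  fixes p :: "('v, 'k::comm_ring_1) mpoly"
  assumes vars: "mpoly_vars p \<subseteq> V"
    and const: "\<And>c. P (const_poly c)"
    and var: "\<And>v. v \<in> V \<Longrightarrow> P (var_poly v)"
    and add: "\<And>p q. P p \<Longrightarrow> P q \<Longrightarrow> P (p + q)"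
    and mult: "\<And>p q. P p \<Longrightarrow> P q \<Longrightarrow> P (p * q)"
  shows "P p"
proof -
  have one: "P 1"
    using const[of 1] by (simp add: const_poly_1)
  have power: "P (var_poly v ^ k)" if "v \<in> V" for v k
    by (induction k) (auto intro: one mult var that)
  have prod: "P (\<Prod>v\<in>A. var_poly v ^ g v)" if "finite A" "A \<subseteq> V" for A g
    using that by (induction A rule: finite_induct) (auto intro: one mult power)
  have monomial: "P (Poly_Mapping.single m c)" if "Poly_Mapping.keys m \<subseteq> V" for m c
    unfolding single_eq_const_poly_mult_prod_var_poly using that by (auto intro!: mult const prod)
  have "P (\<Sum>m\<in>A. Poly_Mapping.single m (Poly_Mapping.lookup p m))"
    if "finite A" "A \<subseteq> Poly_Mapping.keys p" for A
    using that
  proof (induction A rule: finite_induct)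
    case empty
    then show ?case
      using const[of 0] by (simp add: const_poly_0)
  next
    case (insert m A)
    then show ?case
      using vars by (auto simp: mpoly_vars_def intro!: add monomial)
  qed
  then show ?thesis
    using sum_single_lookup[of p] by (metis finite_keys order_refl)
qed

lemma derivation_eqI:
  assumes "is_derivation d" "is_derivation e" "\<And>v. d (var_poly v) = e (var_poly v)"
  shows "d = e"
proof
  fix p
  show "d p = e p"
    using subset_UNIV[of "mpoly_vars p"]
    by (induction rule: mpoly_vars_induct)
       (simp_all add: assms derivation_add derivation_mult)
qed

lemma derivation_expansion:
  fixes E :: "('v::finite, 'k::comm_ring_1) mpoly \<Rightarrow> ('v, 'k) mpoly"
  assumes "is_derivation E"
  shows "E p = (\<Sum>v\<in>UNIV. E (var_poly v) * pderiv_var v p)"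
proof -
  have "E = (\<lambda>p. \<Sum>v\<in>UNIV. E (var_poly v) * pderiv_var v p)"
    by (rule derivation_eqI[OF assms is_derivation_linear_combination[OF is_derivation_pderiv_var]])
       (simp add: pderiv_var_var if_distrib cong: if_cong)
  then show ?thesis
    by (rule fun_cong)
qed

section \<open>Local nilpotency\<close>

lemma derivation_funpow_0 [simp]: "is_derivation d \<Longrightarrow> (d ^^ m) 0 = 0"
  by (induction m) auto

lemma derivation_funpow_add: "is_derivation d \<Longrightarrow> (d ^^ m) (p + q) = (d ^^ m) p + (d ^^ m) q"
  by (induction m) (auto simp: derivation_add)

lemma derivation_funpow_eq_0_mono:
  assumes "is_derivation d" "(d ^^ m) p = 0" "m \<le> k"
  shows "(d ^^ k) p = 0"
proof -
  have "(d ^^ k) p = (d ^^ (k - m)) ((d ^^ m) p)"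
    using funpow_add[of "k - m" m d] \<open>m \<le> k\<close> by simp
  then show ?thesis
    using assms by simp
qed

lemma derivation_funpow_mult_eq_0:
  assumes d: "is_derivation d"
  shows "(d ^^ a) p = 0 \<Longrightarrow> (d ^^ b) q = 0 \<Longrightarrow> (d ^^ (a + b)) (p * q) = 0"
proof (induction "a + b" arbitrary: a b p q rule: less_induct)
  case less
  show ?case
  proof (cases "a = 0 \<or> b = 0")
    case True
    then show ?thesis
      using less.prems d by auto
  next
    case False
    then obtain a' b' where a: "a = Suc a'" and b: "b = Suc b'"
      by (meson not0_implies_Suc)
    have dp: "(d ^^ a') (d p) = 0" and dq: "(d ^^ b') (d q) = 0"
      using less.prems a b by (simp_all add: funpow_Suc_right del: funpow.simps)
    have "(d ^^ (a + b')) (p * d q) = 0"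
      by (rule less.hyps) (use b less.prems dq in auto)
    moreover have "(d ^^ (b + a')) (q * d p) = 0"
      by (rule less.hyps) (use a less.prems dp in auto)
    moreover have "(d ^^ (a + b)) (p * q) = (d ^^ (a' + b)) (d (p * q))"
      using a by (simp add: funpow_Suc_right del: funpow.simps)
    moreover have "a' + b = a + b'" "a' + b = b + a'"
      using a b by simp_all
    ultimately show ?thesis
      by (simp add: derivation_mult[OF d] derivation_funpow_add[OF d])
  qed
qed

lemma derivation_nilpotent_on_mpoly_vars:
  assumes d: "is_derivation d"
    and var: "\<And>v. v \<in> V \<Longrightarrow> \<exists>m. (d ^^ m) (var_poly v) = 0"
    and vars: "mpoly_vars p \<subseteq> V"
  shows "\<exists>m. (d ^^ m) p = 0"
  using vars
proof (induction rule: mpoly_vars_induct)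
  case (const c)
  show ?case
    using d by (intro exI[of _ 1]) simp
next
  case (add p q)
  then obtain a b where "(d ^^ a) p = 0" "(d ^^ b) q = 0"
    by blast
  then have "(d ^^ (a + b)) p = 0" "(d ^^ (a + b)) q = 0"
    by (auto intro: derivation_funpow_eq_0_mono[OF d])
  then show ?case
    by (intro exI[of _ "a + b"]) (simp add: derivation_funpow_add[OF d])
next
  case (mult p q)
  then show ?case
    using derivation_funpow_mult_eq_0[OF d] by blast
qed (use var in blast)

lemma locally_nilpotent_derivationI:
  assumes d: "is_derivation d" and var: "\<And>v. \<exists>m. (d ^^ m) (var_poly v) = 0"
  shows "locally_nilpotent d"
  unfolding locally_nilpotent_def
proof
  fix p
  obtain m where "(d ^^ m) p = 0"
    using derivation_nilpotent_on_mpoly_vars[OF d var subset_UNIV] by blast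
  then have "(d ^^ Suc m) p = 0"
    by (rule derivation_funpow_eq_0_mono[OF d]) simp
  then show "\<exists>m\<ge>1. (d ^^ m) p = 0"
    by (intro exI[of _ "Suc m"]) simp
qed

lemma locally_nilpotent_pderiv_var: "locally_nilpotent (pderiv_var v)"
proof (rule locally_nilpotent_derivationI[OF is_derivation_pderiv_var])
  fix w
  show "\<exists>m. (pderiv_var v ^^ m) (var_poly w) = 0"
    by (intro exI[of _ 2]) (simp add: numeral_2_eq_2 pderiv_var_var is_derivation_pderiv_var)
qed

section \<open>Polynomials in one variable\<close>

lemma mpoly_vars_subset_if_pderiv_var_eq_0:
  fixes h :: "('v, 'k::{idom,ring_char_0}) mpoly"
  assumes "\<And>w. w \<notin> V \<Longrightarrow> pderiv_var w h = 0"
  shows "mpoly_vars h \<subseteq> V"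
proof
  fix w assume "w \<in> mpoly_vars h"
  then obtain m where m: "m \<in> Poly_Mapping.keys h" and w: "w \<in> Poly_Mapping.keys m"
    by (auto simp: mpoly_vars_def)
  show "w \<in> V"
  proof (rule ccontr)
    assume "w \<notin> V"
    then have "Poly_Mapping.lookup (pderiv_var w h) (m - Poly_Mapping.single w 1) = 0"
      using assms by simp
    moreover have mw: "Poly_Mapping.lookup m w \<noteq> 0"
      using w by (simp add: in_keys_iff)
    moreover have "Poly_Mapping.lookup (m - Poly_Mapping.single w 1) w + 1 = Poly_Mapping.lookup m w"
      using mw by (simp add: lookup_minus lookup_single)
    ultimately have "of_nat (Poly_Mapping.lookup m w) * Poly_Mapping.lookup h m = (0::'k)"
      by (metis lookup_pderiv_var diff_single_add_single)
    then show False
      using m mw by (simp add: in_keys_iff)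
  qed
qed

lemma keys_subset_singleton_imp_eq_single:
  fixes m :: "'v \<Rightarrow>\<^sub>0 nat"
  assumes "Poly_Mapping.keys m \<subseteq> {n}"
  shows "m = Poly_Mapping.single n (Poly_Mapping.lookup m n)"
proof (rule poly_mapping_eqI)
  fix x
  show "Poly_Mapping.lookup m x = Poly_Mapping.lookup (Poly_Mapping.single n (Poly_Mapping.lookup m n)) x"
    using assms by (cases "x = n") (auto simp: lookup_single in_keys_iff)
qed

lemma lookup_mult_top_degree_one_var:
  fixes u w :: "('v, 'k::comm_ring_1) mpoly"
  assumes u: "mpoly_vars u \<subseteq> {n}"
    and deg_u: "\<And>m. m \<in> Poly_Mapping.keys u \<Longrightarrow> Poly_Mapping.lookup m n \<le> a"
    and deg_w: "\<And>m. m \<in> Poly_Mapping.keys w \<Longrightarrow> Poly_Mapping.lookup m n \<le> b"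
    and m0: "Poly_Mapping.lookup m0 n = b"
  shows "Poly_Mapping.lookup (u * w) (m0 + Poly_Mapping.single n a) =
    Poly_Mapping.lookup u (Poly_Mapping.single n a) * Poly_Mapping.lookup w m0"
proof -
  let ?x = "m0 + Poly_Mapping.single n a"
  have summand: "Poly_Mapping.lookup (Poly_Mapping.single m (Poly_Mapping.lookup u m) * w) ?x =
      (if m = Poly_Mapping.single n a then Poly_Mapping.lookup u m * Poly_Mapping.lookup w m0 else 0)"
    if m: "m \<in> Poly_Mapping.keys u" for m
  proof -
    define i where "i = Poly_Mapping.lookup m n"
    have mi: "m = Poly_Mapping.single n i"
      using keys_subset_singleton_imp_eq_single[of m n] u m by (auto simp: mpoly_vars_def i_def)
    have "i \<le> a"
      using deg_u[OF m] by (simp add: i_def)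
    then have "?x = m + (m0 + Poly_Mapping.single n (a - i))"
      by (simp add: mi add.commute add.left_commute flip: single_add)
    then have "Poly_Mapping.lookup (Poly_Mapping.single m (Poly_Mapping.lookup u m) * w) ?x =
        Poly_Mapping.lookup u m * Poly_Mapping.lookup w (m0 + Poly_Mapping.single n (a - i))"
      by (simp add: lookup_single_mult)
    also have "\<dots> = (if m = Poly_Mapping.single n a then Poly_Mapping.lookup u m * Poly_Mapping.lookup w m0 else 0)"
    proof (cases "i = a")
      case False
      with \<open>i \<le> a\<close> have "\<not> Poly_Mapping.lookup (m0 + Poly_Mapping.single n (a - i)) n \<le> b"
        using m0 by (simp add: lookup_add)
      then have "m0 + Poly_Mapping.single n (a - i) \<notin> Poly_Mapping.keys w"
        using deg_w by blast
      moreover have "m \<noteq> Poly_Mapping.single n a"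
        using mi False by (metis lookup_single_eq)
      ultimately show ?thesis
        by (simp add: in_keys_iff)
    qed (simp add: mi)
    finally show ?thesis .
  qed
  have "Poly_Mapping.lookup (u * w) ?x =
      (\<Sum>m\<in>Poly_Mapping.keys u. Poly_Mapping.lookup (Poly_Mapping.single m (Poly_Mapping.lookup u m) * w) ?x)"
    by (subst (1) sum_single_lookup[of u, symmetric]) (simp add: sum_distrib_right lookup_sum)
  also have "\<dots> = (\<Sum>m\<in>Poly_Mapping.keys u.
      if m = Poly_Mapping.single n a then Poly_Mapping.lookup u m * Poly_Mapping.lookup w m0 else 0)"
    by (rule sum.cong) (simp_all add: summand)
  also have "\<dots> = Poly_Mapping.lookup u (Poly_Mapping.single n a) * Poly_Mapping.lookup w m0"
    by (simp add: in_keys_iff)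
  finally show ?thesis .
qed

lemma unit_one_var_eq_const_poly:
  fixes u :: "('v, 'k::idom) mpoly"
  assumes u: "mpoly_vars u \<subseteq> {n}" and unit: "u dvd 1"
  shows "u = const_poly (Poly_Mapping.lookup u 0)"
proof -
  obtain w where uw: "u * w = 1"
    using unit by (metis dvdE)
  let ?deg = "\<lambda>p. Max ((\<lambda>m. Poly_Mapping.lookup m n) ` Poly_Mapping.keys p)"
  have nonzero: "Poly_Mapping.keys u \<noteq> {}" "Poly_Mapping.keys w \<noteq> {}"
    using uw by auto
  have deg_ge: "Poly_Mapping.lookup m n \<le> ?deg p" if "m \<in> Poly_Mapping.keys p" for m p
    using that by (intro Max_ge) auto
  have deg_attained: "?deg p \<in> (\<lambda>m. Poly_Mapping.lookup m n) ` Poly_Mapping.keys p"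
    if "Poly_Mapping.keys p \<noteq> {}" for p
    using that by (intro Max_in) auto
  obtain ma where ma: "ma \<in> Poly_Mapping.keys u" "Poly_Mapping.lookup ma n = ?deg u"
    using deg_attained[OF nonzero(1)] by (metis (no_types, lifting) imageE)
  then have lead_u: "Poly_Mapping.single n (?deg u) \<in> Poly_Mapping.keys u"
    using keys_subset_singleton_imp_eq_single[of ma n] u by (auto simp: mpoly_vars_def)
  obtain m0 where m0: "m0 \<in> Poly_Mapping.keys w" "Poly_Mapping.lookup m0 n = ?deg w"
    using deg_attained[OF nonzero(2)] by (metis (no_types, lifting) imageE)
  have "Poly_Mapping.lookup (u * w) (m0 + Poly_Mapping.single n (?deg u)) =
      Poly_Mapping.lookup u (Poly_Mapping.single n (?deg u)) * Poly_Mapping.lookup w m0"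
    by (rule lookup_mult_top_degree_one_var[OF u deg_ge deg_ge m0(2)])
  also have "\<dots> \<noteq> 0"
    using lead_u m0(1) by (simp add: in_keys_iff)
  finally have "m0 + Poly_Mapping.single n (?deg u) = 0"
    using uw by (simp add: lookup_one when_def split: if_splits)
  then have "Poly_Mapping.lookup (m0 + Poly_Mapping.single n (?deg u)) n = 0"
    by simp
  then have deg_u: "?deg u = 0"
    by (simp add: lookup_add)
  show ?thesis
  proof (rule poly_mapping_eqI)
    fix k
    show "Poly_Mapping.lookup u k = Poly_Mapping.lookup (const_poly (Poly_Mapping.lookup u 0)) k"
    proof (cases "k \<in> Poly_Mapping.keys u")
      case True
      then have "k = 0"
        using keys_subset_singleton_imp_eq_single[of k n] u deg_ge[OF True] deg_u
        by (auto simp: mpoly_vars_def)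
      then show ?thesis
        by (simp add: const_poly_def)
    next
      case False
      then show ?thesis
        by (auto simp: const_poly_def lookup_single when_def in_keys_iff)
    qed
  qed
qed

lemma derivation_one_var_chain_rule:
  fixes E :: "('v::finite, 'k::comm_ring_1) mpoly \<Rightarrow> ('v, 'k) mpoly"
  assumes "is_derivation E" "\<And>w. w \<noteq> n \<Longrightarrow> pderiv_var w h = 0"
  shows "E h = E (var_poly n) * pderiv_var n h"
proof -
  have "E h = (\<Sum>v\<in>UNIV. E (var_poly v) * pderiv_var v h)"
    by (rule derivation_expansion[OF assms(1)])
  also have "\<dots> = (\<Sum>v\<in>UNIV. if v = n then E (var_poly n) * pderiv_var n h else 0)"
    by (rule sum.cong) (use assms(2) in auto)
  finally show ?thesis
    by simp
qed

section \<open>Commuting D-simple families\<close>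

lemma is_ideal_multiples: "is_ideal {x. g dvd x}"
  unfolding is_ideal_def by (auto intro: dvd_add dvd_mult)

lemma D_simple_stable_divisor_dvd_1:
  assumes simple: "D_simple D" and derivs: "\<forall>e\<in>D. is_derivation e"
    and "g \<noteq> 0" and stable: "\<And>e. e \<in> D \<Longrightarrow> g dvd e g"
  shows "g dvd 1"
proof -
  have "\<forall>e\<in>D. e ` {x. g dvd x} \<subseteq> {x. g dvd x}"
  proof (intro ballI image_subsetI)
    fix e x assume e: "e \<in> D" and "x \<in> {x. g dvd x}"
    then obtain a where "x = g * a"
      by (auto elim: dvdE)
    then have "e x = g * e a + a * e g"
      using derivs e by (simp add: derivation_mult)
    then show "e x \<in> {x. g dvd x}"
      using stable[OF e] by simp
  qed
  with simple is_ideal_multiples have "{x. g dvd x} = {0} \<or> {x. g dvd x} = UNIV"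
    unfolding D_simple_def by blast
  moreover have "g \<in> {x. g dvd x}"
    by simp
  ultimately have "1 \<in> {x. g dvd x}"
    using \<open>g \<noteq> 0\<close> by blast
  then show ?thesis
    by simp
qed

lemma var_poly_not_dvd_1: "\<not> var_poly v dvd (1::('v, 'k::idom) mpoly)"
proof
  assume unit: "var_poly v dvd (1::('v, 'k) mpoly)"
  have "mpoly_vars (var_poly v :: ('v, 'k) mpoly) \<subseteq> {v}"
    by (simp add: mpoly_vars_def var_poly_def)
  then have "var_poly v = (const_poly (Poly_Mapping.lookup (var_poly v) 0) :: ('v, 'k) mpoly)"
    using unit by (rule unit_one_var_eq_const_poly)
  then have "pderiv_var v (var_poly v) = pderiv_var v (const_poly (Poly_Mapping.lookup (var_poly v :: ('v, 'k) mpoly) 0))"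
    by (rule arg_cong)
  then show False
    by (simp add: pderiv_var_var is_derivation_pderiv_var)
qed

lemma pderiv_var_of_commuting_derivation_var:
  assumes "is_derivation d" "pderiv_var w \<circ> d = d \<circ> pderiv_var w"
  shows "pderiv_var w (d (var_poly v)) = 0"
proof -
  have "pderiv_var w (d (var_poly v)) = (pderiv_var w \<circ> d) (var_poly v)"
    by simp
  also have "\<dots> = d (pderiv_var w (var_poly v))"
    by (simp only: assms(2) comp_apply)
  finally have "pderiv_var w (d (var_poly v)) = d (pderiv_var w (var_poly v))" .
  then show ?thesis
    using assms(1) by (simp add: pderiv_var_var)
qed

lemma D_simple_exists_derivation_var_eq_const:
  fixes D :: "(('v::finite, 'k::field_char_0) mpoly \<Rightarrow> ('v, 'k) mpoly) set"
  assumes derivs: "\<forall>d\<in>D. is_derivation d"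
    and comm: "\<forall>d1\<in>D. \<forall>d2\<in>D. d1 \<circ> d2 = d2 \<circ> d1"
    and simple: "D_simple D"
    and partials: "\<forall>v. v \<noteq> n \<longrightarrow> pderiv_var v \<in> D"
  shows "\<exists>d\<in>D. \<exists>c. c \<noteq> 0 \<and> d (var_poly n) = const_poly c"
proof -
  have one_var: "pderiv_var w (d (var_poly v)) = 0" if d: "d \<in> D" and w: "w \<noteq> n" for d v w
  proof -
    have "pderiv_var w \<in> D"
      using partials w by blast
    with d show ?thesis
      using derivs comm by (intro pderiv_var_of_commuting_derivation_var) blast+
  qed
  show ?thesis
  proof (cases "\<exists>d\<in>D. d (var_poly n) \<noteq> 0")
    case True
    then obtain d where d: "d \<in> D" "d (var_poly n) \<noteq> 0"
      by blast
    have "d (var_poly n) dvd e (d (var_poly n))" if e: "e \<in> D" for e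
    proof -
      have "e (d (var_poly n)) = (e \<circ> d) (var_poly n)"
        by simp
      also have "\<dots> = d (e (var_poly n))"
        by (simp only: comm[rule_format, OF e d(1)] comp_apply)
      also have "\<dots> = d (var_poly n) * pderiv_var n (e (var_poly n))"
      proof (rule derivation_one_var_chain_rule)
        show "is_derivation d"
          using derivs d(1) by blast
        show "pderiv_var w (e (var_poly n)) = 0" if "w \<noteq> n" for w
          using one_var[OF e that] .
      qed
      finally show ?thesis
        by (simp only: dvd_triv_left)
    qed
    then have "d (var_poly n) dvd 1"
      by (rule D_simple_stable_divisor_dvd_1[OF simple derivs d(2)])
    moreover have "mpoly_vars (d (var_poly n)) \<subseteq> {n}"
      using one_var[OF d(1)] by (intro mpoly_vars_subset_if_pderiv_var_eq_0) blast
    ultimately have const: "d (var_poly n) = const_poly (Poly_Mapping.lookup (d (var_poly n)) 0)"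
      by (intro unit_one_var_eq_const_poly)
    have "Poly_Mapping.lookup (d (var_poly n)) 0 \<noteq> 0"
    proof
      assume "Poly_Mapping.lookup (d (var_poly n)) 0 = 0"
      with const d(2) show False
        by (simp add: const_poly_0)
    qed
    with const d(1) show ?thesis
      by blast
  next
    case False
    have "var_poly n \<noteq> (0::('v, 'k) mpoly)"
    proof
      assume "var_poly n = (0::('v, 'k) mpoly)"
      then have "pderiv_var n (var_poly n) = (0::('v, 'k) mpoly)"
        by simp
      then show False
        by (simp add: pderiv_var_var)
    qed
    then have "var_poly n dvd (1::('v, 'k) mpoly)"
    proof (rule D_simple_stable_divisor_dvd_1[OF simple derivs])
      fix e assume "e \<in> D"
      with False have "e (var_poly n) = 0"
        by blast
      then show "var_poly n dvd e (var_poly n)"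
        by (simp only: dvd_0_right)
    qed
    then show ?thesis
      by (simp add: var_poly_not_dvd_1)
  qed
qed

lemma locally_nilpotent_derivation_into_one_var:
  fixes d :: "('v, 'k::{idom,ring_char_0}) mpoly \<Rightarrow> ('v, 'k) mpoly"
  assumes d: "is_derivation d" and d_n: "d (var_poly n) = const_poly c"
    and one_var: "\<And>v w. w \<noteq> n \<Longrightarrow> pderiv_var w (d (var_poly v)) = 0"
  shows "locally_nilpotent d"
proof (rule locally_nilpotent_derivationI[OF d])
  fix v
  have "mpoly_vars (d (var_poly v)) \<subseteq> {n}"
    using one_var by (intro mpoly_vars_subset_if_pderiv_var_eq_0) blast
  moreover have "(d ^^ 2) (var_poly n) = 0"
    using d d_n by (simp add: numeral_2_eq_2)
  ultimately obtain m where "(d ^^ m) (d (var_poly v)) = 0"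
    using derivation_nilpotent_on_mpoly_vars[OF d, of "{n}"] by blast
  then show "\<exists>m. (d ^^ m) (var_poly v) = 0"
    by (intro exI[of _ "Suc m"]) (simp add: funpow_Suc_right del: funpow.simps)
qed

lemma is_Der_basis_replace_pderiv_var:
  fixes d :: "('v::finite, 'k::field) mpoly \<Rightarrow> ('v, 'k) mpoly"
  assumes d: "is_derivation d" and d_n: "d (var_poly n) = const_poly c" and "c \<noteq> 0"
  defines "B \<equiv> \<lambda>v. if v = n then d else pderiv_var v"
  shows "is_Der_basis B"
  unfolding is_Der_basis_def
proof (intro conjI allI impI)
  show B_der: "is_derivation (B v)" for v
    using d by (simp add: B_def is_derivation_pderiv_var)
  have combination_var: "(\<Sum>v\<in>UNIV. g v * B v (var_poly w)) =
      (if w = n then g n * const_poly c else g n * d (var_poly w) + g w)" for g w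
  proof -
    have "(\<Sum>v\<in>UNIV. g v * B v (var_poly w)) =
        g n * d (var_poly w) + (\<Sum>v\<in>UNIV - {n}. g v * pderiv_var v (var_poly w))"
      by (subst sum.remove[of UNIV n]) (auto simp: B_def)
    also have "(\<Sum>v\<in>UNIV - {n}. g v * pderiv_var v (var_poly w)) = (if w = n then 0 else g w)"
      by (simp add: pderiv_var_var if_distrib cong: if_cong)
    finally show ?thesis
      using d_n by simp
  qed
  have inverse_c: "const_poly (inverse c) * const_poly c = 1"
    using \<open>c \<noteq> 0\<close> by (simp add: const_poly_mult const_poly_1)
  fix E :: "('v, 'k) mpoly \<Rightarrow> ('v, 'k) mpoly"
  assume E: "is_derivation E"
  define f where "f v = (if v = n then const_poly (inverse c) * E (var_poly n)
      else E (var_poly v) - const_poly (inverse c) * E (var_poly n) * d (var_poly v))" for v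
  have "E = (\<lambda>p. \<Sum>v\<in>UNIV. f v * B v p)"
  proof (rule derivation_eqI[OF E is_derivation_linear_combination[OF B_der]])
    fix w
    have "E (var_poly n) = const_poly (inverse c) * E (var_poly n) * const_poly c"
      using inverse_c by (metis mult.commute mult.left_commute mult_1_right)
    then show "E (var_poly w) = (\<Sum>v\<in>UNIV. f v * B v (var_poly w))"
      unfolding combination_var by (simp add: f_def)
  qed
  moreover have "g = f" if "E = (\<lambda>p. \<Sum>v\<in>UNIV. g v * B v p)" for g
  proof -
    have E_var: "E (var_poly w) = (\<Sum>v\<in>UNIV. g v * B v (var_poly w))" for w
      using that by simp
    have "g n = const_poly (inverse c) * (g n * const_poly c)"
      using inverse_c by (metis mult.commute mult.left_commute mult_1_right)
    then have g_n: "g n = f n"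
      using E_var[of n] by (simp add: combination_var f_def)
    show "g = f"
    proof
      fix w
      show "g w = f w"
        using g_n E_var[of w] by (cases "w = n") (simp_all add: combination_var f_def)
    qed
  qed
  ultimately show "\<exists>!f. E = (\<lambda>p. \<Sum>v\<in>UNIV. f v * B v p)"
    by blast
qed

theorem corollary2p8:
  fixes D :: "(('v::finite, 'k::field_char_0) mpoly \<Rightarrow> ('v, 'k) mpoly) set"
    and vn :: 'v
  assumes derivs: "\<forall>d\<in>D. is_derivation d"
    and comm: "\<forall>d1\<in>D. \<forall>d2\<in>D. d1 \<circ> d2 = d2 \<circ> d1"
    and simple: "D_simple D"
    and partials: "\<forall>v. v \<noteq> vn \<longrightarrow> pderiv_var v \<in> D"
    and "jacobian_conjecture TYPE('v) TYPE('k)"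
  shows "\<exists>d\<in>D. locally_nilpotent_commutative_basis
                 (\<lambda>v. if v = vn then d else pderiv_var v)
             \<and> locally_nilpotent d"
proof -
  obtain d c where d: "d \<in> D" "c \<noteq> 0" "d (var_poly vn) = const_poly c"
    using D_simple_exists_derivation_var_eq_const[OF derivs comm simple partials] by blast
  have d_der: "is_derivation d"
    using derivs d(1) by blast
  have one_var: "pderiv_var w (d (var_poly v)) = 0" if "w \<noteq> vn" for v w
    using that d(1) derivs comm partials by (intro pderiv_var_of_commuting_derivation_var) blast+
  have nilpotent: "locally_nilpotent d"
    using locally_nilpotent_derivation_into_one_var[OF d_der d(3) one_var] .
  let ?B = "\<lambda>v. if v = vn then d else pderiv_var v"
  have "locally_nilpotent_commutative_basis ?B"
    unfolding locally_nilpotent_commutative_basis_def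
  proof (intro conjI allI)
    show "is_Der_basis ?B"
      using is_Der_basis_replace_pderiv_var[OF d_der d(3) d(2)] .
    show "?B u \<circ> ?B w = ?B w \<circ> ?B u" for u w
      using comm d(1) partials by simp
    show "locally_nilpotent (?B v)" for v
      using nilpotent by (simp add: locally_nilpotent_pderiv_var)
  qed
  with d(1) nilpotent show ?thesis
    by blast
qed

end
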